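(* Let $\sigma_A>0$, let $A\in\mathbb R^{m\times d}$ have i.i.d. entries $A_{i,j}\sim\mathcal N(0,\sigma_A^2)$, let $b\in\mathbb R^m$, let $\phi(z)=\max\{z,0\}$ be the ReLU applied coordinatewise, and let $f(x)=\phi(Ax+b)$ for $x\in[0,1]^d$. Define the $\ell_1$ global sensitivity \[ \mathrm{GS}_1(f)=\sup\{\|f(x_1)-f(x_2)\|_1 : x_1,x_2\in[0,1]^d \text{ differ in at most one entry}\}. \] Then for any $\delta\in(0,1)$, \[ \Pr_A\Big[\mathrm{GS}_1(f)\le \sigma_A m+4\sigma_A\sqrt m\,\log^{1.5}(md/\delta)\Big]\ge 1-\delta . \]
   Context: $\|v\|_1=\sum_i|v_i|$. The probability is over the random matrix $A$. *)

theory Defs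
  imports "HOL-Probability.Probability"
begin

definition relu_layer :: "('m::finite \<times> 'd::finite \<Rightarrow> real) \<Rightarrow> ('m \<Rightarrow> real) \<Rightarrow> ('d \<Rightarrow> real) \<Rightarrow> 'm \<Rightarrow> real" where
  "relu_layer A b x i = max ((\<Sum>j\<in>UNIV. A (i, j) * x j) + b i) 0"

definition unit_cube :: "('d::finite \<Rightarrow> real) set" where
  "unit_cube = {x. \<forall>j. 0 \<le> x j \<and> x j \<le> 1}"

definition l1_norm :: "('m::finite \<Rightarrow> real) \<Rightarrow> real" where
  "l1_norm v = (\<Sum>i\<in>UNIV. \<bar>v i\<bar>)"

definition GS1 :: "(('d::finite \<Rightarrow> real) \<Rightarrow> ('m::finite \<Rightarrow> real)) \<Rightarrow> real" where
  "GS1 f = Sup {l1_norm (\<lambda>i. f x1 i - f x2 i) | x1 x2.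
      x1 \<in> unit_cube \<and> x2 \<in> unit_cube \<and> card {j. x1 j \<noteq> x2 j} \<le> 1}"

definition gauss_matrix :: "real \<Rightarrow> ('m::finite \<times> 'd::finite \<Rightarrow> real) measure" where
  "gauss_matrix \<sigma> = PiM UNIV (\<lambda>_. density lborel (normal_density 0 \<sigma>))"

end

theory Submission
  imports Defs
begin

(* Changing one input coordinate x_j inside the unit cube moves it by at most 1, and ReLU is
   1-Lipschitz, so output i of the layer changes by at most |A_ij|.  Hence GS_1(f) is bounded
   by the l1-norm of some column of A, and it suffices to bound each column norm and take a
   union bound over the d columns.

   A column norm S is a sum of m independent |N(0, sigma^2)| variables, and
   E exp(l |X|) <= 2 exp(l^2 sigma^2 / 2) - 1 + l sigma sqrt(2/pi).  For l = 1/(4 sigma) this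
   is at most e^(1/4) because sqrt(2/pi) < 4/5, so the Chernoff bound gives
   P(S >= sigma m + 4 sigma t) <= e^(-t).  With L = ln(m d / delta) and t = sqrt m L^(3/2) this
   is at most e^(-L) = delta / (m d) as soon as m L >= 1.  When m L < 1, the required bound
   m e^(-L) is at least 1 if m >= 2, and for m = 1 Markov's inequality with
   E |X| = sigma sqrt(2/pi) suffices. *)

lemma ennreal_le_minus_of_add_le:
  fixes x :: ennreal and r c :: real
  assumes "x + ennreal c \<le> ennreal r" "0 \<le> c" "0 \<le> r"
  shows "x \<le> ennreal (r - c)"
proof -
  obtain y where y: "x = ennreal y" "0 \<le> y"
    using assms(1) by (cases x) (auto simp: top_add top_unique)
  have "y + c \<le> r"
    using assms y by (simp add: ennreal_plus[symmetric] ennreal_le_iff del: ennreal_plus)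
  then show ?thesis using y by (simp add: ennreal_leI)
qed

lemma sqrt_two_div_pi_le: "sqrt (2 / pi) \<le> 4 / 5"
proof -
  have "2 / pi \<le> (4 / 5)\<^sup>2" using pi_approx(1) by (simp add: field_simps)
  then show ?thesis using real_sqrt_le_mono by fastforce
qed

lemma sqrt_two_div_pi_mult_exp_square_le:
  fixes s :: real
  assumes "0 \<le> s" "s \<le> 1"
  shows "sqrt (2 / pi) * exp (s\<^sup>2) \<le> 1 + 4 * s ^ 3"
proof -
  have "exp (s\<^sup>2) \<le> 1 + s\<^sup>2 + (s\<^sup>2)\<^sup>2"
    using assms by (intro exp_bound) (auto simp: power_le_one)
  moreover have "4 * s\<^sup>2 \<le> 1 + 16 * s ^ 3"
  proof (cases "s \<le> 1 / 2")
    case True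
    then have "s\<^sup>2 \<le> (1 / 2)\<^sup>2" using assms by (intro power_mono) auto
    then have "4 * s\<^sup>2 \<le> 1" by (simp add: power2_eq_square)
    moreover have "0 \<le> s ^ 3" using assms by simp
    ultimately show ?thesis by linarith
  next
    case False
    then have "s\<^sup>2 * 1 \<le> s\<^sup>2 * (4 * s)" by (intro mult_left_mono) auto
    then show ?thesis using assms by (simp add: power2_eq_square power3_eq_cube)
  qed
  moreover have "(s\<^sup>2)\<^sup>2 \<le> s ^ 3"
    using power_decreasing[of 3 4 s] assms by (simp flip: power_mult)
  moreover have "sqrt (2 / pi) * exp (s\<^sup>2) \<le> 4 / 5 * exp (s\<^sup>2)"
    by (intro mult_right_mono sqrt_two_div_pi_le) simp
  ultimately show ?thesis by linarith
qed

lemma powr_three_halves: "0 \<le> x \<Longrightarrow> x powr (3 / 2) = x * sqrt x" for x :: real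
  using powr_add[of x 1 "1 / 2"] by (cases "x = 0") (simp_all add: powr_half_sqrt)

lemma (in prob_space) prob_Markov_inequality_nn_integral:
  fixes u :: "'a \<Rightarrow> real"
  assumes "u \<in> borel_measurable M" "0 < c" "(\<integral>\<^sup>+x. ennreal (u x) \<partial>M) \<le> ennreal B" "0 \<le> B"
  shows "prob {x \<in> space M. c \<le> u x} \<le> B / c"
proof -
  let ?E = "{x \<in> space M. c \<le> u x}"
  have E: "?E \<in> sets M" using assms(1) by measurable
  have "ennreal c * emeasure M ?E = (\<integral>\<^sup>+x. ennreal c * indicator ?E x \<partial>M)"
    using E by (simp add: nn_integral_cmult_indicator)
  also have "\<dots> \<le> (\<integral>\<^sup>+x. ennreal (u x) \<partial>M)"
    by (intro nn_integral_mono) (auto simp: indicator_def ennreal_leI)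
  also have "\<dots> \<le> ennreal B" by fact
  finally have "c * prob ?E \<le> B"
    using assms(2,4) by (simp add: emeasure_eq_measure ennreal_mult'[symmetric] ennreal_le_iff)
  then show ?thesis using assms(2) by (simp add: field_simps)
qed

section \<open>Moments of the centered normal distribution\<close>

lemma nn_integral_normal_density: "0 < \<sigma> \<Longrightarrow> (\<integral>\<^sup>+x. normal_density \<mu> \<sigma> x \<partial>lborel) = 1"
  using nn_integral_eq_integral[OF integrable_normal_density] by simp

lemma nn_integral_normal_density_mult_exp:
  assumes "0 < \<sigma>"
  shows "(\<integral>\<^sup>+x. ennreal (normal_density 0 \<sigma> x * exp (l * x)) \<partial>lborel) = exp (l\<^sup>2 * \<sigma>\<^sup>2 / 2)"
proof -
  \<comment> \<open>completing the square\<close>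
  have "normal_density 0 \<sigma> x * exp (l * x) = exp (l\<^sup>2 * \<sigma>\<^sup>2 / 2) * normal_density (l * \<sigma>\<^sup>2) \<sigma> x" for x
  proof -
    have "- (x\<^sup>2 / (2 * \<sigma>\<^sup>2)) + l * x = l\<^sup>2 * \<sigma>\<^sup>2 / 2 - (x - l * \<sigma>\<^sup>2)\<^sup>2 / (2 * \<sigma>\<^sup>2)"
      using assms by (simp add: field_simps power2_eq_square)
    then show ?thesis
      unfolding normal_density_def by (simp add: exp_add[symmetric] exp_diff mult_ac)
  qed
  then show ?thesis
    by (simp add: ennreal_mult nn_integral_cmult nn_integral_normal_density assms)
qed

lemma nn_integral_normal_density_mult_abs:
  assumes "0 < \<sigma>"
  shows "(\<integral>\<^sup>+x. ennreal (normal_density 0 \<sigma> x * \<bar>x\<bar>) \<partial>lborel) = \<sigma> * sqrt (2 / pi)"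
proof -
  have "has_bochner_integral lborel (\<lambda>x. normal_density 0 \<sigma> x * \<bar>x\<bar>) (\<sigma> * sqrt (2 / pi))"
    using normal_moment_abs_odd[OF assms, of 0 0] by simp
  then show ?thesis
    by (simp add: has_bochner_integral_iff nn_integral_eq_integral)
qed

abbreviation centered_normal :: "real \<Rightarrow> real measure" where
  "centered_normal \<sigma> \<equiv> density lborel (normal_density 0 \<sigma>)"

lemma nn_integral_centered_normal_exp_abs_le:
  assumes "0 < \<sigma>" "0 \<le> l"
  shows "(\<integral>\<^sup>+x. exp (l * \<bar>x\<bar>) \<partial>centered_normal \<sigma>)
    \<le> 2 * exp (l\<^sup>2 * \<sigma>\<^sup>2 / 2) - 1 + l * \<sigma> * sqrt (2 / pi)"
proof -
  let ?n = "normal_density 0 \<sigma>"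
  have pointwise: "exp (l * \<bar>x\<bar>) + 1 \<le> exp (l * x) + exp (- l * x) + l * \<bar>x\<bar>" for x
    using exp_ge_add_one_self[of "- l * x"] exp_ge_add_one_self[of "l * x"]
    by (cases "0 \<le> x") (simp_all del: exp_ge_add_one_self)
  have "(\<integral>\<^sup>+x. exp (l * \<bar>x\<bar>) \<partial>centered_normal \<sigma>) + ennreal 1
      = (\<integral>\<^sup>+x. ennreal (?n x * exp (l * \<bar>x\<bar>)) \<partial>lborel) + (\<integral>\<^sup>+x. ?n x \<partial>lborel)"
    by (simp add: nn_integral_density ennreal_mult' nn_integral_normal_density assms(1))
  also have "\<dots> = (\<integral>\<^sup>+x. ennreal (?n x * exp (l * \<bar>x\<bar>)) + ennreal (?n x) \<partial>lborel)"
    by (rule nn_integral_add[symmetric]) auto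
  also have "\<dots> \<le> (\<integral>\<^sup>+x. ennreal (?n x * exp (l * x)) + ennreal (?n x * exp (- l * x))
                        + ennreal l * ennreal (?n x * \<bar>x\<bar>) \<partial>lborel)"
    using mult_left_mono[OF pointwise normal_density_nonneg] assms(2)
    by (intro nn_integral_mono)
      (simp add: ennreal_mult'[symmetric] ennreal_plus[symmetric] algebra_simps del: ennreal_plus)
  also have "\<dots> = ennreal (exp (l\<^sup>2 * \<sigma>\<^sup>2 / 2)) + ennreal (exp ((- l)\<^sup>2 * \<sigma>\<^sup>2 / 2))
                    + ennreal l * ennreal (\<sigma> * sqrt (2 / pi))"
    using nn_integral_normal_density_mult_exp[OF assms(1), of "- l"]
    by (simp add: nn_integral_add nn_integral_cmult nn_integral_normal_density_mult_exp
        nn_integral_normal_density_mult_abs assms)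
  also have "\<dots> = ennreal (2 * exp (l\<^sup>2 * \<sigma>\<^sup>2 / 2) + l * \<sigma> * sqrt (2 / pi))"
    using assms by (simp add: ennreal_mult[symmetric] ennreal_plus[symmetric] mult.assoc del: ennreal_plus)
  finally have "(\<integral>\<^sup>+x. exp (l * \<bar>x\<bar>) \<partial>centered_normal \<sigma>)
      \<le> ennreal (2 * exp (l\<^sup>2 * \<sigma>\<^sup>2 / 2) + l * \<sigma> * sqrt (2 / pi) - 1)"
    by (rule ennreal_le_minus_of_add_le) (use assms in auto)
  then show ?thesis by (simp add: algebra_simps)
qed

lemma nn_integral_centered_normal_exp_abs_quarter:
  assumes "0 < \<sigma>"
  shows "(\<integral>\<^sup>+x. exp (\<bar>x\<bar> / (4 * \<sigma>)) \<partial>centered_normal \<sigma>) \<le> exp (1 / 4)"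
proof -
  have "(\<integral>\<^sup>+x. exp (\<bar>x\<bar> / (4 * \<sigma>)) \<partial>centered_normal \<sigma>)
      \<le> 2 * exp ((1 / (4 * \<sigma>))\<^sup>2 * \<sigma>\<^sup>2 / 2) - 1 + 1 / (4 * \<sigma>) * \<sigma> * sqrt (2 / pi)"
    using nn_integral_centered_normal_exp_abs_le[OF assms, of "1 / (4 * \<sigma>)"] assms by simp
  also have "\<dots> = 2 * exp (1 / 32) - 1 + sqrt (2 / pi) / 4"
    using assms by (simp add: power2_eq_square)
  also have "\<dots> \<le> exp (1 / 4)"
  proof (rule ennreal_leI)
    have "exp (1 / 32 :: real) \<le> 1 + 1 / 32 + (1 / 32)\<^sup>2" by (rule exp_bound) auto
    moreover have "1 + 1 / 4 + (1 / 4)\<^sup>2 / 2 \<le> exp (1 / 4 :: real)"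
      by (rule exp_lower_Taylor_quadratic) simp
    ultimately show "2 * exp (1 / 32) - 1 + sqrt (2 / pi) / 4 \<le> exp (1 / 4)"
      using sqrt_two_div_pi_le by (simp add: power2_eq_square)
  qed
  finally show ?thesis .
qed

section \<open>The Gaussian random matrix\<close>

lemma product_prob_space_centered_normal:
  "0 < \<sigma> \<Longrightarrow> product_prob_space (\<lambda>_::'i. centered_normal \<sigma>)"
  using prob_space_normal_density[of \<sigma> 0]
  by (auto simp: product_prob_space_def product_prob_space_axioms_def product_sigma_finite_def
      intro: prob_space_imp_sigma_finite)

lemma prob_space_gauss_matrix:
  "0 < \<sigma> \<Longrightarrow> prob_space (gauss_matrix \<sigma> :: ('m::finite \<times> 'd::finite \<Rightarrow> real) measure)"
  unfolding gauss_matrix_def by (intro prob_space_PiM prob_space_normal_density)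

lemma space_gauss_matrix [simp]: "space (gauss_matrix \<sigma>) = UNIV"
  by (simp add: gauss_matrix_def space_PiM)

lemma sets_gauss_matrix [measurable_cong]: "sets (gauss_matrix \<sigma>) = sets borel"
proof -
  have "sets (gauss_matrix \<sigma> :: ('m::finite \<times> 'd::finite \<Rightarrow> real) measure) = sets (PiM UNIV (\<lambda>_. borel))"
    unfolding gauss_matrix_def by (rule sets_PiM_cong) auto
  then show ?thesis by (simp add: sets_PiM_equal_borel)
qed

lemma nn_integral_gauss_matrix_prod:
  fixes J :: "('m::finite \<times> 'd::finite) set"
  assumes "0 < \<sigma>" "f \<in> borel_measurable borel"
  shows "(\<integral>\<^sup>+A. (\<Prod>k\<in>J. f (A k)) \<partial>gauss_matrix \<sigma>) = (\<integral>\<^sup>+x. f x \<partial>centered_normal \<sigma>) ^ card J"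
proof -
  interpret product_prob_space "\<lambda>_::'m \<times> 'd. centered_normal \<sigma>"
    using product_prob_space_centered_normal[OF assms(1)] .
  have "(\<Prod>k\<in>J. f (A k)) = (\<Prod>k\<in>UNIV. if k \<in> J then f (A k) else 1)" for A :: "'m \<times> 'd \<Rightarrow> real"
    by (simp add: prod.If_cases Int_absorb1)
  then have "(\<integral>\<^sup>+A. (\<Prod>k\<in>J. f (A k)) \<partial>gauss_matrix \<sigma>)
      = (\<Prod>k\<in>UNIV. \<integral>\<^sup>+x. (if k \<in> J then f x else 1) \<partial>centered_normal \<sigma>)"
    using product_nn_integral_prod[of UNIV "\<lambda>k x. if k \<in> J then f x else 1"] assms(2)
    by (simp add: gauss_matrix_def)
  also have "\<dots> = (\<Prod>k\<in>UNIV. if k \<in> J then \<integral>\<^sup>+x. f x \<partial>centered_normal \<sigma> else 1)"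
    by (intro prod.cong) (use M.emeasure_space_1 in auto)
  also have "\<dots> = (\<integral>\<^sup>+x. f x \<partial>centered_normal \<sigma>) ^ card J"
    by (simp add: prod.If_cases Int_absorb1)
  finally show ?thesis .
qed

lemma nn_integral_gauss_matrix_exp_column:
  fixes j :: "'d::finite"
  assumes "0 < \<sigma>"
  shows "(\<integral>\<^sup>+A. exp (l * l1_norm (\<lambda>i. A (i, j))) \<partial>(gauss_matrix \<sigma> :: ('m::finite \<times> 'd \<Rightarrow> real) measure))
    = (\<integral>\<^sup>+x. exp (l * \<bar>x\<bar>) \<partial>centered_normal \<sigma>) ^ CARD('m)"
proof -
  let ?column = "(\<lambda>i. (i, j)) ` (UNIV :: 'm set)"
  have "ennreal (exp (l * l1_norm (\<lambda>i. A (i, j)))) = (\<Prod>k\<in>?column. ennreal (exp (l * \<bar>A k\<bar>)))"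
    for A :: "'m \<times> 'd \<Rightarrow> real"
    by (simp add: l1_norm_def sum_distrib_left exp_sum prod_ennreal prod.reindex inj_on_def)
  moreover have "card ?column = CARD('m)"
    by (simp add: card_image inj_on_def)
  ultimately show ?thesis
    using nn_integral_gauss_matrix_prod[OF assms, of "\<lambda>x. ennreal (exp (l * \<bar>x\<bar>))" ?column]
    by simp
qed

lemma nn_integral_gauss_matrix_column_l1_norm:
  fixes \<sigma> :: real and j :: "'d::finite"
  assumes "0 < \<sigma>"
  shows "(\<integral>\<^sup>+A. l1_norm (\<lambda>i. A (i, j)) \<partial>(gauss_matrix \<sigma> :: ('m::finite \<times> 'd \<Rightarrow> real) measure))
    = ennreal (CARD('m) * \<sigma> * sqrt (2 / pi))"
proof -
  have entry: "(\<integral>\<^sup>+A. \<bar>A k\<bar> \<partial>(gauss_matrix \<sigma> :: ('m \<times> 'd \<Rightarrow> real) measure)) = \<sigma> * sqrt (2 / pi)" for k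
    using nn_integral_gauss_matrix_prod[OF assms, of "\<lambda>x. ennreal \<bar>x\<bar>" "{k}"]
    by (simp add: nn_integral_density ennreal_mult'[symmetric] nn_integral_normal_density_mult_abs assms)
  have "(\<integral>\<^sup>+A. l1_norm (\<lambda>i. A (i, j)) \<partial>(gauss_matrix \<sigma> :: ('m \<times> 'd \<Rightarrow> real) measure))
      = (\<Sum>i\<in>UNIV. \<integral>\<^sup>+A. \<bar>A (i, j)\<bar> \<partial>(gauss_matrix \<sigma> :: ('m \<times> 'd \<Rightarrow> real) measure))"
    unfolding l1_norm_def by (simp add: sum_ennreal[symmetric] nn_integral_sum del: sum_ennreal)
  also have "\<dots> = ennreal (CARD('m) * \<sigma> * sqrt (2 / pi))"
    using assms by (simp add: entry ennreal_of_nat_eq_real_of_nat ennreal_mult mult.assoc)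
  finally show ?thesis .
qed

section \<open>Tail bounds for the l1-norm of a column\<close>

lemma prob_gauss_matrix_column_l1_norm_ge_exp:
  fixes \<sigma> s :: real and j :: "'d::finite"
  assumes "0 < \<sigma>"
  shows "measure (gauss_matrix \<sigma> :: ('m::finite \<times> 'd \<Rightarrow> real) measure)
      {A \<in> space (gauss_matrix \<sigma>). \<sigma> * CARD('m) + 4 * \<sigma> * s \<le> l1_norm (\<lambda>i. A (i, j))}
    \<le> exp (- s)"
proof -
  interpret prob_space "gauss_matrix \<sigma> :: ('m \<times> 'd \<Rightarrow> real) measure"
    using prob_space_gauss_matrix[OF assms] .
  define l where "l = 1 / (4 * \<sigma>)"
  have l: "0 < l" using assms by (simp add: l_def)
  have moment: "(\<integral>\<^sup>+A. exp (l * l1_norm (\<lambda>i. A (i, j))) \<partial>(gauss_matrix \<sigma> :: ('m \<times> 'd \<Rightarrow> real) measure))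
      \<le> ennreal (exp (CARD('m) / 4))"
  proof -
    have "(\<integral>\<^sup>+A. exp (l * l1_norm (\<lambda>i. A (i, j))) \<partial>(gauss_matrix \<sigma> :: ('m \<times> 'd \<Rightarrow> real) measure))
        \<le> ennreal (exp (1 / 4)) ^ CARD('m)"
      unfolding nn_integral_gauss_matrix_exp_column[OF assms]
      using nn_integral_centered_normal_exp_abs_quarter[OF assms]
      by (intro power_mono) (simp_all add: l_def)
    also have "\<dots> = ennreal (exp (CARD('m) / 4))"
      by (simp add: ennreal_power exp_of_nat_mult[symmetric])
    finally show ?thesis .
  qed
  have "{A \<in> space (gauss_matrix \<sigma>). \<sigma> * CARD('m) + 4 * \<sigma> * s \<le> l1_norm (\<lambda>i. A (i, j))}
      = {A \<in> space (gauss_matrix \<sigma>).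
          exp (l * (\<sigma> * CARD('m) + 4 * \<sigma> * s)) \<le> exp (l * l1_norm (\<lambda>i. A (i, j)))}"
    using l by simp
  also have "prob \<dots> \<le> exp (CARD('m) / 4) / exp (l * (\<sigma> * CARD('m) + 4 * \<sigma> * s))"
    by (intro prob_Markov_inequality_nn_integral moment) (simp_all add: l1_norm_def)
  also have "\<dots> = exp (- s)"
    using assms by (simp add: l_def exp_diff[symmetric] field_simps)
  finally show ?thesis .
qed

lemma prob_gauss_matrix_column_l1_norm_ge_mean:
  fixes \<sigma> T :: real and j :: "'d::finite"
  assumes "0 < \<sigma>" "0 < T"
  shows "measure (gauss_matrix \<sigma> :: ('m::finite \<times> 'd \<Rightarrow> real) measure)
      {A \<in> space (gauss_matrix \<sigma>). T \<le> l1_norm (\<lambda>i. A (i, j))}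
    \<le> CARD('m) * \<sigma> * sqrt (2 / pi) / T"
proof -
  interpret prob_space "gauss_matrix \<sigma> :: ('m \<times> 'd \<Rightarrow> real) measure"
    using prob_space_gauss_matrix[OF assms(1)] .
  show ?thesis
    using assms nn_integral_gauss_matrix_column_l1_norm[OF assms(1), where 'm='m and j=j]
    by (intro prob_Markov_inequality_nn_integral) (simp_all add: l1_norm_def)
qed

lemma prob_gauss_matrix_column_l1_norm_ge_powr_large:
  fixes \<sigma> L :: real and j :: "'d::finite"
  assumes "0 < \<sigma>" "1 \<le> CARD('m) * L"
  shows "measure (gauss_matrix \<sigma> :: ('m::finite \<times> 'd \<Rightarrow> real) measure)
      {A \<in> space (gauss_matrix \<sigma>).
        \<sigma> * CARD('m) + 4 * \<sigma> * sqrt CARD('m) * L powr (3 / 2) \<le> l1_norm (\<lambda>i. A (i, j))}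
    \<le> exp (- L)" (is "measure ?G ?E \<le> _")
proof -
  have "0 < CARD('m) * L" using assms(2) by linarith
  then have "0 \<le> L" by (simp add: zero_less_mult_iff)
  have "1 \<le> sqrt (CARD('m) * L)" using assms(2) by simp
  then have "L * 1 \<le> L * sqrt (CARD('m) * L)" using \<open>0 \<le> L\<close> by (intro mult_left_mono)
  then have "L \<le> sqrt CARD('m) * L powr (3 / 2)"
    using \<open>0 \<le> L\<close> by (simp add: powr_three_halves real_sqrt_mult mult_ac)
  have "measure ?G ?E \<le> exp (- (sqrt CARD('m) * L powr (3 / 2)))"
    using prob_gauss_matrix_column_l1_norm_ge_exp[where 'm='m, OF assms(1), of "sqrt CARD('m) * L powr (3 / 2)" j]
    by (simp add: mult.assoc)
  also have "\<dots> \<le> exp (- L)"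
    using \<open>L \<le> sqrt CARD('m) * L powr (3 / 2)\<close> by simp
  finally show ?thesis .
qed

lemma prob_gauss_matrix_column_l1_norm_ge_powr_small:
  fixes \<sigma> L :: real and j :: "'d::finite"
  assumes "0 < \<sigma>" "0 < L" "CARD('m) * L < 1"
  shows "measure (gauss_matrix \<sigma> :: ('m::finite \<times> 'd \<Rightarrow> real) measure)
      {A \<in> space (gauss_matrix \<sigma>).
        \<sigma> * CARD('m) + 4 * \<sigma> * sqrt CARD('m) * L powr (3 / 2) \<le> l1_norm (\<lambda>i. A (i, j))}
    \<le> CARD('m) * exp (- L)"
proof (cases "CARD('m) = 1")
  case True
  define s where "s = sqrt L"
  have s: "0 \<le> s" "s \<le> 1" "s\<^sup>2 = L" using assms(2,3) True by (simp_all add: s_def)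
  have "0 < \<sigma> * (1 + 4 * s ^ 3)" using assms(1) s by (simp add: add_pos_nonneg)
  then have "measure (gauss_matrix \<sigma> :: ('m \<times> 'd \<Rightarrow> real) measure)
      {A \<in> space (gauss_matrix \<sigma>). \<sigma> * (1 + 4 * s ^ 3) \<le> l1_norm (\<lambda>i. A (i, j))}
    \<le> CARD('m) * \<sigma> * sqrt (2 / pi) / (\<sigma> * (1 + 4 * s ^ 3))"
    by (rule prob_gauss_matrix_column_l1_norm_ge_mean[OF assms(1)])
  also have "\<dots> = sqrt (2 / pi) / (1 + 4 * s ^ 3)"
    using True assms(1) by simp
  also have "\<dots> \<le> exp (- s\<^sup>2)"
    using sqrt_two_div_pi_mult_exp_square_le[OF s(1,2)] s(1)
    by (simp add: exp_minus field_simps add_pos_nonneg)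
  finally show ?thesis
    using True assms(2) s by (simp add: powr_three_halves s_def power3_eq_cube algebra_simps)
next
  case False
  then have m: "2 \<le> real CARD('m)"
    using zero_less_card_finite[where 'a='m] by linarith
  then have "L * 2 \<le> L * CARD('m)" using assms(2) by (intro mult_left_mono) auto
  then have "exp L \<le> exp (1 / 2)" using assms(3) by (simp add: mult.commute)
  then have "exp L \<le> CARD('m)" using exp_half_le2 m by linarith
  then have "1 \<le> CARD('m) * exp (- L)" by (simp add: exp_minus field_simps)
  then show ?thesis
    using prob_space.prob_le_1[OF prob_space_gauss_matrix[OF assms(1)]] order_trans by blast
qed

lemma prob_gauss_matrix_column_l1_norm_ge_powr:
  fixes \<sigma> L :: real and j :: "'d::finite"
  assumes "0 < \<sigma>" "0 < L"
  shows "measure (gauss_matrix \<sigma> :: ('m::finite \<times> 'd \<Rightarrow> real) measure)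
      {A \<in> space (gauss_matrix \<sigma>).
        \<sigma> * CARD('m) + 4 * \<sigma> * sqrt CARD('m) * L powr (3 / 2) \<le> l1_norm (\<lambda>i. A (i, j))}
    \<le> CARD('m) * exp (- L)"
proof (cases "1 \<le> CARD('m) * L")
  case True
  have "exp (- L) \<le> CARD('m) * exp (- L)" by simp
  then show ?thesis
    using prob_gauss_matrix_column_l1_norm_ge_powr_large[OF assms(1) True, where j=j] by linarith
next
  case False
  then show ?thesis using prob_gauss_matrix_column_l1_norm_ge_powr_small[where 'm='m, OF assms] by simp
qed

section \<open>Sensitivity of a ReLU layer\<close>

lemma abs_max_zero_diff_le: "\<bar>max u 0 - max v 0\<bar> \<le> \<bar>u - v\<bar>" for u v :: real
  by (auto simp: max_def)

lemma l1_norm_relu_layer_diff_le_column: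
  fixes A :: "'m::finite \<times> 'd::finite \<Rightarrow> real" and x1 x2 :: "'d \<Rightarrow> real"
  assumes "x1 \<in> unit_cube" "x2 \<in> unit_cube" "\<And>k. k \<noteq> j \<Longrightarrow> x1 k = x2 k"
  shows "l1_norm (\<lambda>i. relu_layer A b x1 i - relu_layer A b x2 i) \<le> l1_norm (\<lambda>i. A (i, j))"
  unfolding l1_norm_def
proof (rule sum_mono)
  fix i
  have "(\<Sum>k\<in>UNIV. A (i, k) * x1 k) - (\<Sum>k\<in>UNIV. A (i, k) * x2 k) = (\<Sum>k\<in>UNIV. A (i, k) * (x1 k - x2 k))"
    by (simp add: sum_subtractf right_diff_distrib)
  also have "\<dots> = A (i, j) * (x1 j - x2 j)"
    using assms(3) by (subst sum.remove[of _ j]) auto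
  finally have pre_activation_diff:
    "(\<Sum>k\<in>UNIV. A (i, k) * x1 k) + b i - ((\<Sum>k\<in>UNIV. A (i, k) * x2 k) + b i) = A (i, j) * (x1 j - x2 j)"
    by simp
  have "\<bar>relu_layer A b x1 i - relu_layer A b x2 i\<bar>
      \<le> \<bar>(\<Sum>k\<in>UNIV. A (i, k) * x1 k) + b i - ((\<Sum>k\<in>UNIV. A (i, k) * x2 k) + b i)\<bar>"
    unfolding relu_layer_def by (rule abs_max_zero_diff_le)
  also have "\<dots> = \<bar>A (i, j)\<bar> * \<bar>x1 j - x2 j\<bar>"
    unfolding pre_activation_diff by (rule abs_mult)
  also have "\<dots> \<le> \<bar>A (i, j)\<bar>"
  proof (rule mult_left_le)
    have "0 \<le> x1 j" "x1 j \<le> 1" "0 \<le> x2 j" "x2 j \<le> 1"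
      using assms(1,2) by (auto simp: unit_cube_def)
    then show "\<bar>x1 j - x2 j\<bar> \<le> 1" by linarith
  qed simp
  finally show "\<bar>relu_layer A b x1 i - relu_layer A b x2 i\<bar> \<le> \<bar>A (i, j)\<bar>" .
qed

lemma differ_in_at_most_one_entry:
  fixes x1 x2 :: "'d::finite \<Rightarrow> real"
  assumes "card {k. x1 k \<noteq> x2 k} \<le> 1"
  obtains j where "\<And>k. k \<noteq> j \<Longrightarrow> x1 k = x2 k"
proof (cases "{k. x1 k \<noteq> x2 k} = {}")
  case False
  then have "card {k. x1 k \<noteq> x2 k} = 1"
    using assms by (simp add: le_antisym Suc_leI card_gt_0_iff)
  then obtain j where "{k. x1 k \<noteq> x2 k} = {j}"
    by (rule card_1_singletonE)
  then show ?thesis by (intro that[of j]) blast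
qed (use that in auto)

lemma GS1_relu_layer_le_iff:
  fixes A :: "'m::finite \<times> 'd::finite \<Rightarrow> real"
  shows "GS1 (relu_layer A b) \<le> T \<longleftrightarrow>
    (\<forall>x1 x2. x1 \<in> unit_cube \<and> x2 \<in> unit_cube \<and> card {j. x1 j \<noteq> x2 j} \<le> 1 \<longrightarrow>
        l1_norm (\<lambda>i. relu_layer A b x1 i - relu_layer A b x2 i) \<le> T)"
proof -
  let ?S = "{l1_norm (\<lambda>i. relu_layer A b x1 i - relu_layer A b x2 i) | x1 x2.
      x1 \<in> unit_cube \<and> x2 \<in> unit_cube \<and> card {j. x1 j \<noteq> x2 j} \<le> (1::nat)}"
  have "l1_norm (\<lambda>i. relu_layer A b (\<lambda>_. 0) i - relu_layer A b (\<lambda>_. 0) i) \<in> ?S"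
    unfolding unit_cube_def by fastforce
  then have nonempty: "?S \<noteq> {}" by blast
  have bounded: "bdd_above ?S"
  proof (rule bdd_aboveI)
    fix y assume "y \<in> ?S"
    then obtain x1 x2 where y: "y = l1_norm (\<lambda>i. relu_layer A b x1 i - relu_layer A b x2 i)"
      and x: "x1 \<in> unit_cube" "x2 \<in> unit_cube" "card {j. x1 j \<noteq> x2 j} \<le> 1"
      by blast
    obtain j where "\<And>k. k \<noteq> j \<Longrightarrow> x1 k = x2 k"
      using differ_in_at_most_one_entry[OF x(3)] by blast
    then have "y \<le> l1_norm (\<lambda>i. A (i, j))"
      unfolding y using x by (intro l1_norm_relu_layer_diff_le_column)
    also have "\<dots> \<le> (\<Sum>j'\<in>UNIV. l1_norm (\<lambda>i. A (i, j')))"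
      by (rule member_le_sum) (auto simp: l1_norm_def intro: sum_nonneg)
    finally show "y \<le> (\<Sum>j'\<in>UNIV. l1_norm (\<lambda>i. A (i, j')))" .
  qed
  show ?thesis
    unfolding GS1_def cSup_le_iff[OF nonempty bounded] by blast
qed

lemma closed_GS1_relu_layer_le:
  "closed {A :: 'm::finite \<times> 'd::finite \<Rightarrow> real. GS1 (relu_layer A b) \<le> T}"
proof -
  have continuous: "continuous_on UNIV
      (\<lambda>A :: 'm \<times> 'd \<Rightarrow> real. l1_norm (\<lambda>i. relu_layer A b x1 i - relu_layer A b x2 i))" for x1 x2
    unfolding l1_norm_def relu_layer_def
    by (intro continuous_intros continuous_on_product_coordinates)
  show ?thesis
    unfolding GS1_relu_layer_le_iff
    by (intro closed_Collect_all closed_Collect_imp closed_Collect_le continuous continuous_on_const) auto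
qed

lemma GS1_relu_layer_le_column:
  fixes A :: "'m::finite \<times> 'd::finite \<Rightarrow> real"
  obtains j where "GS1 (relu_layer A b) \<le> l1_norm (\<lambda>i. A (i, j))"
proof -
  have "(MAX j. l1_norm (\<lambda>i. A (i, j))) \<in> range (\<lambda>j. l1_norm (\<lambda>i. A (i, j)))"
    by (rule Max_in) auto
  then obtain j where j: "(MAX j. l1_norm (\<lambda>i. A (i, j))) = l1_norm (\<lambda>i. A (i, j))"
    by blast
  have "GS1 (relu_layer A b) \<le> l1_norm (\<lambda>i. A (i, j))"
    unfolding GS1_relu_layer_le_iff
  proof (intro allI impI, elim conjE)
    fix x1 x2 :: "'d \<Rightarrow> real"
    assume x: "x1 \<in> unit_cube" "x2 \<in> unit_cube" "card {j. x1 j \<noteq> x2 j} \<le> 1"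
    obtain k where "\<And>k'. k' \<noteq> k \<Longrightarrow> x1 k' = x2 k'"
      using differ_in_at_most_one_entry[OF x(3)] by blast
    then have "l1_norm (\<lambda>i. relu_layer A b x1 i - relu_layer A b x2 i) \<le> l1_norm (\<lambda>i. A (i, k))"
      using x by (intro l1_norm_relu_layer_diff_le_column)
    also have "\<dots> \<le> l1_norm (\<lambda>i. A (i, j))"
      unfolding j[symmetric] by (rule Max_ge) auto
    finally show "l1_norm (\<lambda>i. relu_layer A b x1 i - relu_layer A b x2 i) \<le> l1_norm (\<lambda>i. A (i, j))" .
  qed
  then show ?thesis by (rule that)
qed

lemma prob_GS1_relu_layer_le_ge:
  fixes \<sigma> T :: real and b :: "'m::finite \<Rightarrow> real"
  assumes "0 < \<sigma>"
  shows "1 - (\<Sum>j\<in>UNIV. measure (gauss_matrix \<sigma> :: ('m \<times> 'd::finite \<Rightarrow> real) measure)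
                {A \<in> space (gauss_matrix \<sigma>). T \<le> l1_norm (\<lambda>i. A (i, j))})
    \<le> measure (gauss_matrix \<sigma> :: ('m \<times> 'd \<Rightarrow> real) measure)
        {A \<in> space (gauss_matrix \<sigma>). GS1 (relu_layer A b) \<le> T}"
proof -
  let ?G = "gauss_matrix \<sigma> :: ('m \<times> 'd \<Rightarrow> real) measure"
  interpret prob_space ?G using prob_space_gauss_matrix[OF assms] .
  let ?good = "{A \<in> space ?G. GS1 (relu_layer A b) \<le> T}"
  let ?large_column = "\<lambda>j. {A \<in> space ?G. T \<le> l1_norm (\<lambda>i. A (i, j))}"
  have good_sets: "?good \<in> sets ?G"
    using borel_closed[OF closed_GS1_relu_layer_le[of b T]] by (simp add: sets_gauss_matrix)
  have large_column_sets: "?large_column j \<in> sets ?G" for j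
    unfolding l1_norm_def by measurable
  have "space ?G - ?good \<subseteq> (\<Union>j. ?large_column j)"
  proof
    fix A assume "A \<in> space ?G - ?good"
    then have "\<not> GS1 (relu_layer A b) \<le> T" by simp
    moreover obtain j where "GS1 (relu_layer A b) \<le> l1_norm (\<lambda>i. A (i, j))"
      by (rule GS1_relu_layer_le_column)
    ultimately have "T \<le> l1_norm (\<lambda>i. A (i, j))" by linarith
    then show "A \<in> (\<Union>j. ?large_column j)" by auto
  qed
  then have "prob (space ?G - ?good) \<le> prob (\<Union>j. ?large_column j)"
    using large_column_sets by (intro finite_measure_mono sets.finite_UN) auto
  also have "\<dots> \<le> (\<Sum>j\<in>UNIV. prob (?large_column j))"
    using large_column_sets by (intro measure_UNION_le) auto
  finally show ?thesis using prob_compl[OF good_sets] by simp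
qed

theorem lemmaD2:
  fixes \<sigma> :: real and b :: "'m::finite \<Rightarrow> real" and \<delta> :: real
  assumes "\<sigma> > 0" and "0 < \<delta>" and "\<delta> < 1"
  shows "measure (gauss_matrix \<sigma> :: ('m \<times> 'd::finite \<Rightarrow> real) measure)
           {A \<in> space (gauss_matrix \<sigma>).
              GS1 (relu_layer A b) \<le> \<sigma> * real CARD('m)
                + 4 * \<sigma> * sqrt (real CARD('m)) * ln (real CARD('m) * real CARD('d) / \<delta>) powr (3/2)}
         \<ge> 1 - \<delta>"
proof -
  define L where "L = ln (real CARD('m) * real CARD('d) / \<delta>)"
  define T where "T = \<sigma> * real CARD('m) + 4 * \<sigma> * sqrt (real CARD('m)) * L powr (3/2)"
  have "1 \<le> real CARD('m) * real CARD('d)"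
    using mult_mono[of 1 "real CARD('m)" 1 "real CARD('d)"] by (simp add: Suc_leI)
  then have L: "0 < L" "real CARD('d) * (real CARD('m) * exp (- L)) = \<delta>"
    using assms(2,3) by (simp_all add: L_def exp_minus)
  have "(\<Sum>j\<in>UNIV. measure (gauss_matrix \<sigma> :: ('m \<times> 'd \<Rightarrow> real) measure)
          {A \<in> space (gauss_matrix \<sigma>). T \<le> l1_norm (\<lambda>i. A (i, j))})
      \<le> (\<Sum>j\<in>(UNIV :: 'd set). real CARD('m) * exp (- L))"
    unfolding T_def by (intro sum_mono prob_gauss_matrix_column_l1_norm_ge_powr assms(1) L(1))
  also have "\<dots> = \<delta>" using L(2) by simp
  finally show ?thesis
    using prob_GS1_relu_layer_le_ge[where 'd='d, OF assms(1), of T b] unfolding T_def L_def by linarith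
qed

end
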